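(* Let $\mathbb{F}$ be an algebraically closed field with $\mathrm{char}\,\mathbb{F}=2$ and $n\ge2$. Let $\underline{a}=(e_1,e_2,0,\ldots,0)\in\mathbb{M}^n$ and let $\underline{b}\in\mathbb{M}^n$ be such that $\dim\mathrm{alg}(\underline{b})\le2$ and $f(\underline{a})=f(\underline{b})$ for all $f\in S_n^{(2)}$. Then ${\rm G}_2\underline{a}={\rm G}_2\underline{b}$.
   Context: The split octonion algebra $\mathbf{O}$ is the 8-dimensional $\mathbb{F}$-vector space of formal matrices $a=\begin{pmatrix}\alpha&\mathbf{u}\\ \mathbf{v}&\beta\end{pmatrix}$ with $\alpha,\beta\in\mathbb{F}$, $\mathbf{u},\mathbf{v}\in\mathbb{F}^3$, with multiplication $\begin{pmatrix}\alpha&\mathbf{u}\\ \mathbf{v}&\beta\end{pmatrix}\begin{pmatrix}\alpha'&\mathbf{u}'\\ \mathbf{v}'&\beta'\end{pmatrix}=\begin{pmatrix}\alpha\alpha'+\mathbf{u}\cdot\mathbf{v}'&\alpha\mathbf{u}'+\beta'\mathbf{u}-\mathbf{v}\times\mathbf{v}'\\ \alpha'\mathbf{v}+\beta\mathbf{v}'+\mathbf{u}\times\mathbf{u}'&\beta\beta'+\mathbf{v}\cdot\mathbf{u}'\end{pmatrix}$ (dot product and cross product on $\mathbb{F}^3$). Trace $\mathrm{tr}(a)=\alpha+\beta$, norm $n(a)=\alpha\beta-\mathbf{u}\cdot\mathbf{v}$. $e_1$ has $\alpha=1$ and all else $0$, $e_2$ has $\beta=1$ and all else $0$. $\mathbb{M}=\left\{\begin{pmatrix}\alpha&(\gamma,0,0)\\(\delta,0,0)&\beta\end{pmatrix}\right\}\subseteq\mathbf{O}$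 is the quaternion subalgebra. ${\rm G}_2=\mathrm{Aut}(\mathbf{O})$ acts diagonally on $\mathbf{O}^n$. For $\underline{b}\in\mathbf{O}^n$, $\mathrm{alg}(\underline{b})$ is the (non-unital) $\mathbb{F}$-subalgebra of $\mathbf{O}$ generated by $b_1,\ldots,b_n$. $S_n^{(2)}$ is the set of functions on $\mathbf{O}^n$: $\underline{a}\mapsto n(a_i)$, $\underline{a}\mapsto\mathrm{tr}(a_i)$ ($1\le i\le n$), and $\underline{a}\mapsto\mathrm{tr}(a_ia_j)$ ($1\le i<j\le n$). *)

theory Defs
  imports "HOL-Computational_Algebra.Polynomial"
begin

text \<open>Split octonions over a field: the formal matrix with entries
  alpha, u = (u1,u2,u3), v = (v1,v2,v3), beta.\<close>

datatype 'a oct = Oct (oal: 'a) (ou1: 'a) (ou2: 'a) (ou3: 'a)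
                      (ov1: 'a) (ov2: 'a) (ov3: 'a) (obe: 'a)

instantiation oct :: (ab_group_add) ab_group_add
begin
definition "0 = Oct 0 0 0 0 0 0 0 0"
definition "x + y = Oct (oal x + oal y) (ou1 x + ou1 y) (ou2 x + ou2 y) (ou3 x + ou3 y)
                        (ov1 x + ov1 y) (ov2 x + ov2 y) (ov3 x + ov3 y) (obe x + obe y)"
definition "- x = Oct (- oal x) (- ou1 x) (- ou2 x) (- ou3 x)
                      (- ov1 x) (- ov2 x) (- ov3 x) (- obe x)"
definition "x - y = Oct (oal x - oal y) (ou1 x - ou1 y) (ou2 x - ou2 y) (ou3 x - ou3 y)
                        (ov1 x - ov1 y) (ov2 x - ov2 y) (ov3 x - ov3 y) (obe x - obe y)"
instance
  by standard (auto simp: zero_oct_def plus_oct_def uminus_oct_def minus_oct_def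
                          algebra_simps intro: oct.expand)
end

text \<open>Multiplication of split octonions (dot and cross product on F^3).\<close>

instantiation oct :: (comm_ring) times
begin
definition "x * y = Oct
   (oal x * oal y + (ou1 x * ov1 y + ou2 x * ov2 y + ou3 x * ov3 y))
   (oal x * ou1 y + obe y * ou1 x - (ov2 x * ov3 y - ov3 x * ov2 y))
   (oal x * ou2 y + obe y * ou2 x - (ov3 x * ov1 y - ov1 x * ov3 y))
   (oal x * ou3 y + obe y * ou3 x - (ov1 x * ov2 y - ov2 x * ov1 y))
   (oal y * ov1 x + obe x * ov1 y + (ou2 x * ou3 y - ou3 x * ou2 y))
   (oal y * ov2 x + obe x * ov2 y + (ou3 x * ou1 y - ou1 x * ou3 y))
   (oal y * ov3 x + obe x * ov3 y + (ou1 x * ou2 y - ou2 x * ou1 y))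
   (obe x * obe y + (ov1 x * ou1 y + ov2 x * ou2 y + ov3 x * ou3 y))"
instance ..
end

definition oct_scale :: "'a::field \<Rightarrow> 'a oct \<Rightarrow> 'a oct" where
  "oct_scale c x = Oct (c * oal x) (c * ou1 x) (c * ou2 x) (c * ou3 x)
                       (c * ov1 x) (c * ov2 x) (c * ov3 x) (c * obe x)"

global_interpretation oct: vector_space "oct_scale :: 'a::field \<Rightarrow> 'a oct \<Rightarrow> 'a oct"
  by standard (auto simp: oct_scale_def plus_oct_def algebra_simps intro: oct.expand)

definition oct_tr :: "'a::comm_ring oct \<Rightarrow> 'a" where
  "oct_tr x = oal x + obe x"
definition oct_n :: "'a::comm_ring oct \<Rightarrow> 'a" where
  "oct_n x = oal x * obe x - (ou1 x * ov1 x + ou2 x * ov2 x + ou3 x * ov3 x)"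

definition oct_e1 :: "'a::comm_ring_1 oct" where "oct_e1 = Oct 1 0 0 0 0 0 0 0"
definition oct_e2 :: "'a::comm_ring_1 oct" where "oct_e2 = Oct 0 0 0 0 0 0 0 1"

definition oct_M :: "'a::comm_ring oct set" where
  "oct_M = {x. ou2 x = 0 \<and> ou3 x = 0 \<and> ov2 x = 0 \<and> ov3 x = 0}"

definition G2 :: "('a::field oct \<Rightarrow> 'a oct) set" where
  "G2 = {g. bij g \<and> Vector_Spaces.linear oct_scale oct_scale g
            \<and> (\<forall>x y. g (x * y) = g x * g y)}"

definition oct_alg :: "'a::field oct set \<Rightarrow> 'a oct set" where
  "oct_alg S = \<Inter>{A. oct.subspace A \<and> (\<forall>x\<in>A. \<forall>y\<in>A. x * y \<in> A) \<and> S \<subseteq> A}"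

text \<open>Equality of the invariants in S_n^(2) for n-tuples indexed by 0..<n.\<close>
definition S2_equal :: "nat \<Rightarrow> (nat \<Rightarrow> 'a::comm_ring oct) \<Rightarrow> (nat \<Rightarrow> 'a oct) \<Rightarrow> bool" where
  "S2_equal n a b \<longleftrightarrow>
     (\<forall>i<n. oct_n (a i) = oct_n (b i) \<and> oct_tr (a i) = oct_tr (b i)) \<and>
     (\<forall>i j. i < j \<and> j < n \<longrightarrow> oct_tr (a i * a j) = oct_tr (b i * b j))"

definition same_G2_orbit :: "nat \<Rightarrow> (nat \<Rightarrow> 'a::field oct) \<Rightarrow> (nat \<Rightarrow> 'a oct) \<Rightarrow> bool" where
  "same_G2_orbit n a b \<longleftrightarrow> (\<exists>g\<in>G2. \<forall>i<n. g (a i) = b i)"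

end

theory Submission
  imports Defs
begin

text \<open>The invariants make \<open>p = b 0\<close> and \<open>q = b 1\<close> idempotents of trace 1 and norm 0 with
  \<open>tr (p q) = 0\<close>; they are independent, so \<open>alg b = span {p, q}\<close>. Writing \<open>p q = x p + y q\<close>,
  the trace gives \<open>x + y = 0\<close> and alternativity gives \<open>p q = (p (p q)) q = (x + y) p q = 0\<close>;
  likewise \<open>q p = 0\<close>, and then the quadratic identity \<open>z\<^sup>2 = tr z z - n z 1\<close> for \<open>z = p + q\<close>
  forces \<open>q = 1 - p\<close>. The other \<open>b i\<close> lie in \<open>span {p, q}\<close> with \<open>tr (b i) = tr (p b i) = 0\<close>,
  so they vanish. Finally every trace-1 norm-0 element of \<open>M\<close> is the image of \<open>e\<^sub>1\<close> under
  conjugation by an element of \<open>SL\<^sub>2\<close>, which extends to an automorphism of \<open>O\<close>.\<close>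

instantiation oct :: (comm_ring_1) one
begin
definition "1 = Oct 1 0 0 0 0 0 0 1"
instance ..
end

lemma oct_e1_plus_e2: "oct_e1 + oct_e2 = (1 :: 'a::comm_ring_1 oct)"
  by (rule oct.expand) (simp_all add: oct_e1_def oct_e2_def one_oct_def plus_oct_def)

lemma oct_mult_add_left: "(x + y) * z = x * z + y * (z :: 'a::comm_ring oct)"
  by (rule oct.expand) (simp_all add: times_oct_def plus_oct_def algebra_simps)

lemma oct_mult_add_right: "x * (y + z) = x * y + x * (z :: 'a::comm_ring oct)"
  by (rule oct.expand) (simp_all add: times_oct_def plus_oct_def algebra_simps)

lemma oct_mult_scale_left: "oct_scale c x * y = oct_scale c (x * y :: 'a::field oct)"
  by (rule oct.expand) (simp_all add: times_oct_def oct_scale_def algebra_simps)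

lemma oct_mult_scale_right: "x * oct_scale c y = oct_scale c (x * y :: 'a::field oct)"
  by (rule oct.expand) (simp_all add: times_oct_def oct_scale_def algebra_simps)

lemma oct_mult_left_alternative: "x * (x * y) = (x * x) * (y :: 'a::comm_ring oct)"
  by (rule oct.expand) (simp_all add: times_oct_def algebra_simps)

lemma oct_mult_right_alternative: "(y * x) * x = y * (x * x :: 'a::comm_ring oct)"
  by (rule oct.expand) (simp_all add: times_oct_def algebra_simps)

lemma oct_tr_add: "oct_tr (x + y) = oct_tr x + oct_tr (y :: 'a::comm_ring oct)"
  by (simp add: oct_tr_def plus_oct_def)

lemma oct_tr_zero [simp]: "oct_tr (0 :: 'a::comm_ring oct) = 0"
  by (simp add: oct_tr_def zero_oct_def)

lemma oct_mult_zero_right [simp]: "x * 0 = (0 :: 'a::comm_ring oct)"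
  by (rule oct.expand) (simp_all add: times_oct_def zero_oct_def)

lemma oct_tr_scale: "oct_tr (oct_scale c x) = c * oct_tr (x :: 'a::field oct)"
  by (simp add: oct_tr_def oct_scale_def algebra_simps)

lemma oct_tr_mult_commute: "oct_tr (x * y) = oct_tr (y * x :: 'a::comm_ring oct)"
  by (simp add: oct_tr_def times_oct_def algebra_simps)

lemma oct_n_add: "oct_n (x + y) = oct_n x + oct_n y + oct_tr x * oct_tr y - oct_tr (x * y :: 'a::comm_ring oct)"
  by (simp add: oct_tr_def oct_n_def plus_oct_def times_oct_def algebra_simps)

lemma oct_mult_self: "x * x = oct_scale (oct_tr x) x - oct_scale (oct_n x) (1 :: 'a::field oct)"
  by (rule oct.expand)
    (simp_all add: oct_tr_def oct_n_def one_oct_def oct_scale_def minus_oct_def times_oct_def algebra_simps)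

lemma oct_idempotentI: "oct_n p = 0 \<Longrightarrow> oct_tr p = 1 \<Longrightarrow> p * p = (p :: 'a::field oct)"
  using oct_mult_self[of p] by simp

lemma oct_idempotent_eq_one:
  fixes z :: "'a::field oct"
  assumes "z * z = z" "oct_tr z = 2" "oct_n z = 1"
  shows "z = 1"
proof -
  have "z = oct_scale 2 z - 1"
    using oct_mult_self[of z] assms by simp
  also have "\<dots> = z + z - 1"
    by (simp add: oct.scale_left_distrib[of 1 1, simplified])
  finally show ?thesis
    by (simp add: algebra_simps)
qed

lemma oct_in_span_pair:
  assumes "x \<in> oct.span {p, q}"
  obtains s t where "x = oct_scale s p + oct_scale t (q :: 'a::field oct)"
proof -
  obtain s where "x - oct_scale s p \<in> oct.span {q}"
    using assms oct.span_breakdown_eq by blast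
  then obtain t where "x - oct_scale s p = oct_scale t q"
    by (auto simp: oct.span_singleton)
  then show ?thesis
    by (metis that diff_add_cancel add.commute)
qed

lemma oct_independent_pair:
  fixes p q :: "'a::field oct"
  assumes "oct_tr p = 1" "oct_tr q = 1" "p \<noteq> q"
  shows "oct.independent {p, q}"
proof -
  have "q \<noteq> 0"
    using assms(2) by (auto simp: oct_tr_def zero_oct_def)
  moreover have "p \<notin> oct.span {q}"
  proof
    assume "p \<in> oct.span {q}"
    then obtain k where k: "p = oct_scale k q"
      by (auto simp: oct.span_singleton)
    then have "k = 1"
      using assms by (simp add: oct_tr_scale)
    then show False
      using k assms(3) by simp
  qed
  ultimately show ?thesis
    using assms(3) by (simp add: oct.independent_insert)
qed

lemma oct_mult_eq_zero_if_in_span: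
  fixes p q :: "'a::field oct"
  assumes "p * p = p" "q * q = q" "oct_tr p = 1" "oct_tr q = 1" "oct_tr (p * q) = 0"
    and "p * q \<in> oct.span {p, q}"
  shows "p * q = 0"
proof -
  obtain x y where xy: "p * q = oct_scale x p + oct_scale y q"
    using assms(6) by (rule oct_in_span_pair)
  have "x + y = 0"
    using arg_cong[OF xy, of oct_tr] assms by (simp add: oct_tr_add oct_tr_scale)
  have left: "p * (p * q) = oct_scale x p + oct_scale y (p * q)"
    by (simp add: xy oct_mult_add_right oct_mult_scale_right assms(1))
  have "p * q = (p * (p * q)) * q"
    by (simp add: oct_mult_left_alternative oct_mult_right_alternative assms(1,2))
  also have "\<dots> = oct_scale (x + y) (p * q)"
    by (simp add: left oct_mult_add_left oct_mult_scale_left oct_mult_right_alternative assms(2)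
        oct.scale_left_distrib)
  also have "\<dots> = 0"
    using \<open>x + y = 0\<close> by simp
  finally show ?thesis .
qed

lemma oct_orthogonal_idempotents_sum_eq_one:
  fixes p q :: "'a::field oct"
  assumes "oct_n p = 0" "oct_tr p = 1" "oct_n q = 0" "oct_tr q = 1"
    and "p * q = 0" "q * p = 0"
  shows "p + q = 1"
proof (rule oct_idempotent_eq_one)
  show "(p + q) * (p + q) = p + q"
    using assms by (simp add: oct_mult_add_left oct_mult_add_right oct_idempotentI)
  show "oct_tr (p + q) = 2" "oct_n (p + q) = 1"
    using assms by (simp_all add: oct_tr_add oct_n_add)
qed

lemma oct_eq_zero_if_in_span:
  fixes p q r :: "'a::field oct"
  assumes "p * p = p" "oct_tr p = 1" "oct_tr q = 1" "oct_tr (p * q) = 0"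
    and "r \<in> oct.span {p, q}" "oct_tr r = 0" "oct_tr (p * r) = 0"
  shows "r = 0"
proof -
  obtain s t where r: "r = oct_scale s p + oct_scale t q"
    using assms(5) by (rule oct_in_span_pair)
  have "s + t = 0" "s = 0"
    using assms unfolding r by (simp_all add: oct_tr_add oct_tr_scale oct_mult_add_right oct_mult_scale_right)
  then show ?thesis
    using r by simp
qed

definition oct_unit_vectors :: "'a::field oct set" where
  "oct_unit_vectors =
    {Oct 1 0 0 0 0 0 0 0, Oct 0 1 0 0 0 0 0 0, Oct 0 0 1 0 0 0 0 0, Oct 0 0 0 1 0 0 0 0,
     Oct 0 0 0 0 1 0 0 0, Oct 0 0 0 0 0 1 0 0, Oct 0 0 0 0 0 0 1 0, Oct 0 0 0 0 0 0 0 1}"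

lemma oct_span_unit_vectors: "oct.span oct_unit_vectors = UNIV"
proof -
  have "x \<in> oct.span oct_unit_vectors" for x :: "'a oct"
  proof -
    have "x = oct_scale (oal x) (Oct 1 0 0 0 0 0 0 0) + oct_scale (ou1 x) (Oct 0 1 0 0 0 0 0 0)
      + oct_scale (ou2 x) (Oct 0 0 1 0 0 0 0 0) + oct_scale (ou3 x) (Oct 0 0 0 1 0 0 0 0)
      + oct_scale (ov1 x) (Oct 0 0 0 0 1 0 0 0) + oct_scale (ov2 x) (Oct 0 0 0 0 0 1 0 0)
      + oct_scale (ov3 x) (Oct 0 0 0 0 0 0 1 0) + oct_scale (obe x) (Oct 0 0 0 0 0 0 0 1)"
      by (rule oct.expand) (simp_all add: oct_scale_def plus_oct_def)
    also have "\<dots> \<in> oct.span oct_unit_vectors"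
      by (intro oct.span_add oct.span_scale oct.span_base) (simp_all add: oct_unit_vectors_def)
    finally show ?thesis .
  qed
  then show ?thesis
    by blast
qed

interpretation oct_fin: finite_dimensional_vector_space oct_scale oct_unit_vectors
proof
  show "finite oct_unit_vectors"
    by (simp add: oct_unit_vectors_def)
  show "oct.independent oct_unit_vectors"
    unfolding oct_unit_vectors_def
    by (subst oct.dependent_finite) (auto simp: oct_scale_def plus_oct_def zero_oct_def)
  show "oct.span oct_unit_vectors = UNIV"
    by (fact oct_span_unit_vectors)
qed

lemma oct_alg_superset: "S \<subseteq> oct_alg S"
  unfolding oct_alg_def by blast

lemma oct_alg_mult: "x \<in> oct_alg S \<Longrightarrow> y \<in> oct_alg S \<Longrightarrow> x * y \<in> oct_alg S"
  unfolding oct_alg_def by blast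

lemma G2_map_zero: "g \<in> G2 \<Longrightarrow> g 0 = 0"
  unfolding G2_def by (auto dest: module_hom.zero simp: Vector_Spaces.linear_iff_module_hom)

text \<open>For \<open>P = [[a, b], [c, d]]\<close> this maps the quaternion part \<open>X = [[\<alpha>, u\<^sub>1], [v\<^sub>1, \<beta>]]\<close>
  to \<open>P X adj P\<close> and mixes \<open>u\<^sub>2, u\<^sub>3, v\<^sub>2, v\<^sub>3\<close> so that the map is multiplicative up to
  the factor \<open>det P\<close>.\<close>

definition sl2_act :: "'a::field \<Rightarrow> 'a \<Rightarrow> 'a \<Rightarrow> 'a \<Rightarrow> 'a oct \<Rightarrow> 'a oct" where
  "sl2_act a b c d x = Oct
     ((a * oal x + b * ov1 x) * d - (a * ou1 x + b * obe x) * c)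
     ((a * ou1 x + b * obe x) * a - (a * oal x + b * ov1 x) * b)
     ((a * ou2 x + b * ou3 x) * d - (a * ov3 x - b * ov2 x) * c)
     ((c * ou2 x + d * ou3 x) * d - (c * ov3 x - d * ov2 x) * c)
     ((c * oal x + d * ov1 x) * d - (c * ou1 x + d * obe x) * c)
     ((c * ou2 x + d * ou3 x) * b - (c * ov3 x - d * ov2 x) * a)
     ((a * ov3 x - b * ov2 x) * a - (a * ou2 x + b * ou3 x) * b)
     ((c * ou1 x + d * obe x) * a - (c * oal x + d * ov1 x) * b)"

lemma sl2_act_mult:
  "sl2_act a b c d x * sl2_act a b c d y = oct_scale (a * d - b * c) (sl2_act a b c d (x * y))"
  by (rule oct.expand) (simp_all add: sl2_act_def oct_scale_def times_oct_def algebra_simps)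

lemma sl2_act_adjugate:
  "sl2_act d (- b) (- c) a (sl2_act a b c d x) = oct_scale ((a * d - b * c)\<^sup>2) x"
  by (rule oct.expand) (simp_all add: sl2_act_def oct_scale_def power2_eq_square algebra_simps)

lemma sl2_act_linear: "Vector_Spaces.linear oct_scale oct_scale (sl2_act a b c d)"
  unfolding Vector_Spaces.linear_iff
proof (intro conjI allI)
  show "sl2_act a b c d (x + y) = sl2_act a b c d x + sl2_act a b c d y" for x y
    by (rule oct.expand) (simp_all add: sl2_act_def plus_oct_def algebra_simps)
  show "sl2_act a b c d (oct_scale k x) = oct_scale k (sl2_act a b c d x)" for k x
    by (rule oct.expand) (simp_all add: sl2_act_def oct_scale_def algebra_simps)
qed (fact oct.vector_space_axioms)+

lemma sl2_act_in_G2: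
  assumes det: "a * d - b * c = 1"
  shows "sl2_act a b c d \<in> G2"
proof -
  have "sl2_act d (- b) (- c) a \<circ> sl2_act a b c d = id"
    using sl2_act_adjugate[of d b c a] det by (simp add: fun_eq_iff)
  moreover have "sl2_act a b c d \<circ> sl2_act d (- b) (- c) a = id"
    using sl2_act_adjugate[of a "- b" "- c" d] det by (simp add: fun_eq_iff mult.commute)
  ultimately have "bij (sl2_act a b c d)"
    using o_bij by blast
  then show ?thesis
    using sl2_act_linear sl2_act_mult[of a b c d] det by (simp add: G2_def)
qed

lemma sl2_act_e1: "sl2_act a b c d oct_e1 = Oct (a * d) (- (a * b)) 0 0 (c * d) 0 0 (- (b * c))"
  by (rule oct.expand) (simp_all add: sl2_act_def oct_e1_def)

lemma rank_one_factorization: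
  fixes \<alpha> \<beta> u v :: "'a::field"
  assumes "\<alpha> + \<beta> = 1" "\<alpha> * \<beta> = u * v"
  obtains a b c d where "a * d - b * c = 1"
    "a * d = \<alpha>" "- (a * b) = u" "c * d = v" "- (b * c) = \<beta>"
proof (cases "\<alpha> = 0")
  case True
  then show ?thesis
    using assms that[of u v "- 1" 1] by simp
next
  case False
  have "u * v / \<alpha> = \<beta>"
    using assms(2) False by (simp add: field_simps)
  then show ?thesis
    using assms(1) False that[of 1 \<alpha> "- u" "v / \<alpha>"] by (simp add: algebra_simps)
qed

lemma oct_M_idempotent_in_orbit_e1:
  fixes p :: "'a::field oct"
  assumes "p \<in> oct_M" "oct_n p = 0" "oct_tr p = 1"
  shows "\<exists>g\<in>G2. g oct_e1 = p \<and> g oct_e2 = 1 - p"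
proof -
  have "oal p + obe p = 1" "oal p * obe p = ou1 p * ov1 p"
    using assms by (simp_all add: oct_M_def oct_n_def oct_tr_def)
  then obtain a b c d where abcd: "a * d - b * c = 1"
    "a * d = oal p" "- (a * b) = ou1 p" "c * d = ov1 p" "- (b * c) = obe p"
    by (rule rank_one_factorization)
  let ?g = "sl2_act a b c d"
  have "?g oct_e1 = p"
    using abcd assms(1) by (intro oct.expand) (simp_all add: sl2_act_e1 oct_M_def)
  moreover have "?g oct_e1 + ?g oct_e2 = 1"
  proof -
    have "?g oct_e1 + ?g oct_e2 = ?g 1"
      using sl2_act_linear oct_e1_plus_e2 unfolding Vector_Spaces.linear_iff by metis
    also have "\<dots> = 1"
      using abcd(1) by (intro oct.expand) (simp_all add: sl2_act_def one_oct_def algebra_simps)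
    finally show ?thesis .
  qed
  ultimately show ?thesis
    using sl2_act_in_G2[OF abcd(1)] by (metis add_diff_cancel_left')
qed

lemma oct_alg_subset_span_idempotents:
  fixes p q :: "'a::field oct"
  assumes "oct_n p = 0" "oct_tr p = 1" "oct_tr q = 1" "oct_tr (p * q) = 0"
    and "p \<in> S" "q \<in> S" "oct.dim (oct_alg S) \<le> 2"
  shows "oct_alg S \<subseteq> oct.span {p, q}"
proof (rule oct_fin.card_ge_dim_independent)
  have "p \<noteq> q"
    using assms(1,2,4) oct_idempotentI by force
  then show "oct.independent {p, q}" "oct.dim (oct_alg S) \<le> card {p, q}"
    using assms(2,3,7) oct_independent_pair by auto
  show "{p, q} \<subseteq> oct_alg S"
    using assms(5,6) oct_alg_superset by blast
qed

lemma oct_complement_if_alg_dim_le_2: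
  fixes p q :: "'a::field oct"
  assumes p: "oct_n p = 0" "oct_tr p = 1" and q: "oct_n q = 0" "oct_tr q = 1"
    and pq: "oct_tr (p * q) = 0"
    and "p \<in> S" "q \<in> S" "oct.dim (oct_alg S) \<le> 2"
  shows "q = 1 - p"
proof -
  have span: "oct_alg S \<subseteq> oct.span {p, q}"
    using oct_alg_subset_span_idempotents assms by blast
  have "p \<in> oct_alg S" "q \<in> oct_alg S"
    using assms(6,7) oct_alg_superset by blast+
  then have "p * q \<in> oct.span {p, q}" "q * p \<in> oct.span {q, p}"
    using span oct_alg_mult by (auto simp: insert_commute)
  moreover have pp: "p * p = p" and qq: "q * q = q"
    using p q by (simp_all add: oct_idempotentI)
  moreover have qp: "oct_tr (q * p) = 0"
    using pq by (simp add: oct_tr_mult_commute)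
  ultimately have "p * q = 0" "q * p = 0"
    using oct_mult_eq_zero_if_in_span[OF pp qq p(2) q(2) pq]
      oct_mult_eq_zero_if_in_span[OF qq pp q(2) p(2) qp] by blast+
  then have "p + q = 1"
    using oct_orthogonal_idempotents_sum_eq_one p q by blast
  then show ?thesis
    by (simp add: algebra_simps)
qed

lemma oct_invariants_e1_e2 [simp]:
  "oct_n oct_e1 = 0" "oct_tr oct_e1 = 1" "oct_n oct_e2 = 0" "oct_tr oct_e2 = 1"
  "oct_tr (oct_e1 * oct_e2) = (0 :: 'a::comm_ring_1)"
  by (simp_all add: oct_n_def oct_tr_def oct_e1_def oct_e2_def times_oct_def)

lemma S2_equal_e1_e2_zeroD:
  fixes a b :: "nat \<Rightarrow> 'a::comm_ring_1 oct"
  assumes "S2_equal n a b" "2 \<le> n"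
    and "a 0 = oct_e1" "a 1 = oct_e2" "\<forall>i. 2 \<le> i \<and> i < n \<longrightarrow> a i = 0"
  shows "oct_n (b 0) = 0" "oct_tr (b 0) = 1" "oct_n (b 1) = 0" "oct_tr (b 1) = 1"
    and "oct_tr (b 0 * b 1) = 0"
    and "\<And>i. 2 \<le> i \<Longrightarrow> i < n \<Longrightarrow> oct_tr (b i) = 0 \<and> oct_tr (b 0 * b i) = 0"
proof -
  have n: "\<And>i. i < n \<Longrightarrow> oct_n (a i) = oct_n (b i) \<and> oct_tr (a i) = oct_tr (b i)"
    and tr: "\<And>i j. i < j \<Longrightarrow> j < n \<Longrightarrow> oct_tr (a i * a j) = oct_tr (b i * b j)"
    using assms(1) by (auto simp: S2_equal_def)
  show "oct_n (b 0) = 0" "oct_tr (b 0) = 1" "oct_n (b 1) = 0" "oct_tr (b 1) = 1"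
    and "oct_tr (b 0 * b 1) = 0"
    using n[of 0] n[of 1] tr[of 0 1] assms(2-4) by simp_all
  show "oct_tr (b i) = 0 \<and> oct_tr (b 0 * b i) = 0" if "2 \<le> i" "i < n" for i
    using n[of i] tr[of 0 i] assms(5) that by simp
qed

theorem lemma7p7:
  fixes a b :: "nat \<Rightarrow> 'a::alg_closed_field oct" and n :: nat
  assumes "CHAR('a) = 2"
    and "n \<ge> 2"
    and "a 0 = oct_e1" and "a 1 = oct_e2" and "\<forall>i. 2 \<le> i \<and> i < n \<longrightarrow> a i = 0"
    and "\<forall>i<n. b i \<in> oct_M"
    and "oct.dim (oct_alg {b i | i. i < n}) \<le> 2"
    and "S2_equal n a b"
  shows "same_G2_orbit n a b"
proof -
  note b = S2_equal_e1_e2_zeroD[OF assms(8,2-5)]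
  define S where "S = {b i | i. i < n}"
  have bS: "b i \<in> S" if "i < n" for i
    using that by (auto simp: S_def)
  have alg: "b 0 \<in> S" "b 1 \<in> S" "oct.dim (oct_alg S) \<le> 2"
    using bS assms(2,7) by (simp_all add: S_def)
  have span: "oct_alg S \<subseteq> oct.span {b 0, b 1}"
    by (rule oct_alg_subset_span_idempotents[OF b(1,2,4,5) alg])
  have b1: "b 1 = 1 - b 0"
    by (rule oct_complement_if_alg_dim_le_2[OF b(1-5) alg])
  have bi: "b i = 0" if "2 \<le> i" "i < n" for i
    using oct_eq_zero_if_in_span[OF oct_idempotentI[OF b(1,2)] b(2,4,5)] b(6)[OF that]
      span oct_alg_superset bS[OF \<open>i < n\<close>] by blast
  obtain g where g: "g \<in> G2" "g oct_e1 = b 0" "g oct_e2 = 1 - b 0"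
    using oct_M_idempotent_in_orbit_e1 assms(2,6) b(1,2) by fastforce
  have "g (a i) = b i" if "i < n" for i
  proof -
    consider "i = 0" | "i = 1" | "2 \<le> i"
      by linarith
    then show ?thesis
      using g G2_map_zero assms(3-5) b1 bi that by cases simp_all
  qed
  then show ?thesis
    using g(1) unfolding same_G2_orbit_def by blast
qed

end
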